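(* Let $n,d\geq 1$. For every $n$-tuple $\mathbf{Q}=(Q_1,\dots,Q_n)$ of distinct points in $\mathbb{E}^d$ and every set $T$ of unordered pairs $\{i,j\}\subseteq\{1,\dots,n\}$, $$\dim T\leq\min\big(n-c(T)-1,\;d-1\big).$$ Moreover, the set of $n$-tuples $\mathbf{Q}$ for which equality holds for every such $T$ is open and dense in $(\mathbb{E}^d)^n$, and every $n$-tuple in this set is in simple position.
   Context: $\mathbb{E}^d$ is embedded in real projective space $\mathbb{P}^d$, with ideal hyperplane $h_\infty=\mathbb{P}^d\setminus\mathbb{E}^d$. For $i\neq j$, $p_{ij}$ is the ideal point of the line $Q_iQ_j$, i.e. the intersection of its projective closure with $h_\infty$. For a set $T$ of unordered pairs $\{i,j\}$, $\dim T$ is the projective dimension of the subspace of $h_\infty$ spanned by $\{p_{ij}:\{i,j\}\in T\}$ (with $\dim\emptyset=-1$), and $c(T)$ is the number of connected components of the graph with vertex set $\{1,\dots,n\}$ and edge set $T$ (isolated vertices counting as components). $\mathbf{Q}$ is in simple position if every subset of at most $d+1$ of the points $Q_1,\dots,Q_n$ is affinely independent. *)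

theory Defs
  imports "HOL-Analysis.Analysis"
begin

text \<open>Tuples Q = (Q_1,...,Q_n) of points of E^d are elements of (real^'d)^'n,
  with n = CARD('n) and d = CARD('d).  A set T of unordered pairs {i,j}, i \<noteq> j,
  is a set of 2-element index sets.\<close>

definition is_pair_set :: "'n set set \<Rightarrow> bool" where
  "is_pair_set T \<longleftrightarrow> (\<forall>e\<in>T. \<exists>i j. i \<noteq> j \<and> e = {i, j})"

text \<open>The ideal point p_ij of line Q_i Q_j is the projective point of h_infinity
  represented by the direction vector Q_j - Q_i; the projective dimension of the
  span of the p_ij is the linear dimension of the span of the direction vectors minus 1.\<close>

definition ideal_dim :: "(real^'d)^'n \<Rightarrow> 'n set set \<Rightarrow> int" where
  "ideal_dim Q T = int (dim {Q $ j - Q $ i | i j. i \<noteq> j \<and> {i, j} \<in> T}) - 1"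

text \<open>Edge relation of the graph on vertex set 'n with edge set T; c(T) is the
  number of classes of its reflexive-transitive closure (connected components,
  isolated vertices included).\<close>

definition edge_rel :: "'n set set \<Rightarrow> ('n \<times> 'n) set" where
  "edge_rel T = {(i, j). i \<noteq> j \<and> {i, j} \<in> T}"

definition num_components :: "'n set set \<Rightarrow> nat" where
  "num_components T = card (UNIV // (edge_rel T)\<^sup>*)"

definition simple_position :: "(real^'d)^'n \<Rightarrow> bool" where
  "simple_position Q \<longleftrightarrow>
     (\<forall>I. card I \<le> CARD('d) + 1 \<longrightarrow> \<not> affine_dependent ((\<lambda>i. Q $ i) ` I))"

end

theory Submission
  imports Defs
begin

text \<open>View the tuple Q as the linear map x \<mapsto> \<Sum>i. x_i Q_i from R^n to R^d, written x v* Q.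
  It sends e_j - e_i to Q_j - Q_i, so the directions of T span the image of the edge space
  W_T = span {e_j - e_i | {i,j} \<in> T}. The orthogonal complement of W_T consists of the vectors
  that are constant on the components of T, so dim W_T = n - c(T), and the rank bound
  dim (Q W_T) \<le> min (dim W_T) d is the inequality. Equality for every T says that Q has maximal
  rank on each of the finitely many edge spaces. Maximal rank on a subspace is an open condition
  (injectivity on a complement of the kernel survives small perturbations) and a dense one
  (a rank-one perturbation raises a deficient rank by one), so the finite intersection is open and
  dense. On the edge space of a star centred at a, maximal rank makes the vectors Q_j - Q_a
  independent, which yields both distinctness of the points and simple position.\<close>

lemma linear_vector_matrix_mult: "linear (\<lambda>x. x v* A)"
  for A :: "real^'m^'n"
  using matrix_vector_mul_linear[of "transpose A"] by simp

lemma axis_vector_matrix_mult: "axis i 1 v* A = A $ i"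
  for A :: "real^'m^'n"
  by (simp add: vec_eq_iff vector_matrix_mult_def axis_def of_bool_def[symmetric])

lemma axis_diff_vector_matrix_mult: "(axis j 1 - axis i 1) v* A = A $ j - A $ i"
  for A :: "real^'m^'n"
  by (simp only: vector_matrix_mult_diff_distrib axis_vector_matrix_mult)

lemma norm_vector_matrix_mult_le: "norm (x v* A) \<le> real CARD('n) * norm x * norm A"
  for A :: "real^'m^'n"
proof -
  have "x v* A = (\<Sum>i\<in>UNIV. (x $ i) *\<^sub>R A $ i)"
    by (simp add: vec_eq_iff vector_matrix_mult_def mult.commute)
  then have "norm (x v* A) \<le> (\<Sum>i\<in>UNIV. norm ((x $ i) *\<^sub>R A $ i))"
    by (metis norm_sum)
  also have "\<dots> \<le> (\<Sum>i\<in>(UNIV::'n set). norm x * norm A)"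
    by (rule sum_mono) (auto intro!: mult_mono component_le_norm_cart Finite_Cartesian_Product.norm_nth_le)
  finally show ?thesis by simp
qed

definition indicator_vec :: "'n set \<Rightarrow> real^'n" where
  "indicator_vec C = (\<chi> k. indicator C k)"

lemma indicator_vec_nth [simp]: "indicator_vec C $ k = indicator C k"
  by (simp add: indicator_vec_def)

lemma independent_indicator_vecs:
  fixes \<C> :: "'n::finite set set"
  assumes "disjoint \<C>" and "{} \<notin> \<C>"
  shows "independent (indicator_vec ` \<C>)" and "inj_on indicator_vec \<C>"
proof -
  have overlap: "C = D" if "C \<in> \<C>" "D \<in> \<C>" "k \<in> C" "k \<in> D" for C D k
    using assms(1) that by (auto simp: disjoint_def)
  have "indicator_vec C \<bullet> indicator_vec D = 0" if "C \<in> \<C>" "D \<in> \<C>" "C \<noteq> D" for C D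
    using overlap[OF that(1,2)] that(3) by (auto simp: inner_vec_def indicator_def intro!: sum.neutral)
  moreover have "indicator_vec C \<noteq> 0" if "C \<in> \<C>" for C
    using assms(2) that by (force simp: vec_eq_iff indicator_def)
  ultimately show "independent (indicator_vec ` \<C>)"
    by (intro pairwise_orthogonal_independent) (auto simp: pairwise_def orthogonal_def)
  show "inj_on indicator_vec \<C>"
  proof (rule inj_onI)
    fix C D assume CD: "C \<in> \<C>" "D \<in> \<C>" and eq: "indicator_vec C = indicator_vec D"
    obtain k where "k \<in> C" using assms(2) CD(1) by (metis ex_in_conv)
    with eq have "k \<in> D" by (metis indicator_vec_nth indicator_simps(1) indicator_simps(2) zero_neq_one)
    then show "C = D" using overlap CD \<open>k \<in> C\<close> by blast
  qed
qed

lemma span_indicator_vecs_quotient: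
  fixes R :: "('n::finite \<times> 'n) set"
  assumes R: "equiv UNIV R"
  shows "span (indicator_vec ` (UNIV // R)) = {y::real^'n. \<forall>(i, j)\<in>R. y $ i = y $ j}"
    (is "_ = ?V")
proof -
  have class_iff: "k \<in> C \<longleftrightarrow> C = R `` {k}" if C: "C \<in> UNIV // R" for C k
  proof -
    obtain a where "C = R `` {a}" using C by (rule quotientE)
    then show ?thesis using equiv_class_eq_iff[OF R, of a k] by simp
  qed
  show ?thesis
  proof (rule span_subspace)
    show "indicator_vec ` (UNIV // R) \<subseteq> ?V"
    proof clarsimp
      fix C i j assume "C \<in> UNIV // R" "(i, j) \<in> R"
      then have "i \<in> C \<longleftrightarrow> j \<in> C"
        using class_iff equiv_class_eq[OF R] by metis
      then show "indicator C i = (indicator C j :: real)"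
        by (simp add: indicator_def)
    qed
  next
    show "subspace ?V" by (auto simp: subspace_def case_prod_unfold)
  next
    show "?V \<subseteq> span (indicator_vec ` (UNIV // R))"
    proof
      fix y :: "real^'n" assume y: "y \<in> ?V"
      define rep where "rep C = (SOME k. k \<in> C)" for C :: "'n set"
      have "y = (\<Sum>C\<in>UNIV // R. y $ rep C *\<^sub>R indicator_vec C)"
      proof (subst vec_eq_iff, intro allI)
        fix k
        have "rep (R `` {k}) \<in> R `` {k}"
          unfolding rep_def by (rule someI[of _ k]) (rule equiv_class_self[OF R, OF UNIV_I])
        then have "y $ k = y $ rep (R `` {k})"
          using y by auto
        also have "\<dots> = (\<Sum>C\<in>UNIV // R. if C = R `` {k} then y $ rep C else 0)"
          by (simp add: quotientI)
        also have "\<dots> = (\<Sum>C\<in>UNIV // R. y $ rep C *\<^sub>R indicator_vec C) $ k"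
          unfolding sum_component by (intro sum.cong) (auto simp: indicator_def class_iff)
        finally show "y $ k = (\<Sum>C\<in>UNIV // R. y $ rep C *\<^sub>R indicator_vec C) $ k" .
      qed
      also have "\<dots> \<in> span (indicator_vec ` (UNIV // R))"
        by (intro span_sum span_scale span_base) auto
      finally show "y \<in> span (indicator_vec ` (UNIV // R))" .
    qed
  qed
qed

lemma dim_constant_on_classes:
  fixes R :: "('n::finite \<times> 'n) set"
  assumes R: "equiv UNIV R"
  shows "dim {y::real^'n. \<forall>(i, j)\<in>R. y $ i = y $ j} = card (UNIV // R)"
proof -
  have disj: "disjoint (UNIV // R)"
    unfolding disjoint_def using quotient_disj[OF R] by blast
  have nonempty: "{} \<notin> UNIV // R"
    using in_quotient_imp_non_empty[OF R] by blast
  note indep = independent_indicator_vecs[OF disj nonempty]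
  have "dim {y::real^'n. \<forall>(i, j)\<in>R. y $ i = y $ j} = dim (indicator_vec ` (UNIV // R))"
    by (simp add: span_indicator_vecs_quotient[OF R, symmetric])
  also have "\<dots> = card (UNIV // R)"
    by (simp add: dim_eq_card_independent[OF indep(1)] card_image[OF indep(2)])
  finally show ?thesis .
qed

definition edge_space :: "'n set set \<Rightarrow> (real^'n) set" where
  "edge_space T = span ((\<lambda>(i, j). axis j 1 - axis i 1) ` edge_rel T)"

lemma ideal_dim_eq_dim_image:
  fixes Q :: "(real^'d)^'n"
  shows "ideal_dim Q T = int (dim ((\<lambda>x. x v* Q) ` edge_space T)) - 1"
proof -
  have "(\<lambda>x. x v* Q) ` edge_space T = span ((\<lambda>x. x v* Q) ` (\<lambda>(i, j). axis j 1 - axis i 1) ` edge_rel T)"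
    unfolding edge_space_def by (rule linear_span_image[OF linear_vector_matrix_mult, symmetric])
  also have "\<dots> = span ((\<lambda>(i, j). Q $ j - Q $ i) ` edge_rel T)"
    unfolding image_image by (intro arg_cong[where f = span] image_cong) (auto simp: axis_diff_vector_matrix_mult)
  also have "\<dots> = span {Q $ j - Q $ i | i j. i \<noteq> j \<and> {i, j} \<in> T}"
    unfolding edge_rel_def by (rule arg_cong[where f = span]) auto
  finally show ?thesis
    unfolding ideal_dim_def by simp
qed

lemma eq_on_rtrancl_iff: "(\<forall>(i, j)\<in>R\<^sup>*. f i = f j) \<longleftrightarrow> (\<forall>(i, j)\<in>R. f i = f j)"
proof
  assume edges: "\<forall>(i, j)\<in>R. f i = f j"
  have "f i = f j" if "(i, j) \<in> R\<^sup>*" for i j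
    using that by (induction rule: rtrancl_induct) (use edges in auto)
  then show "\<forall>(i, j)\<in>R\<^sup>*. f i = f j" by blast
qed auto

lemma orthogonal_span_iff: "(\<forall>x\<in>span S. orthogonal x y) \<longleftrightarrow> (\<forall>x\<in>S. orthogonal x y)"
proof
  assume "\<forall>x\<in>S. orthogonal x y"
  then show "\<forall>x\<in>span S. orthogonal x y"
    using orthogonal_to_span[of _ S y] by (simp add: orthogonal_commute)
qed (simp add: span_base)

lemma orthogonal_edge_space_iff:
  "(\<forall>x\<in>edge_space T. orthogonal x y) \<longleftrightarrow> (\<forall>(i, j)\<in>(edge_rel T)\<^sup>*. y $ i = y $ j)"
proof -
  have "(\<forall>x\<in>edge_space T. orthogonal x y) \<longleftrightarrow> (\<forall>(i, j)\<in>edge_rel T. y $ i = y $ j)"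
    unfolding edge_space_def orthogonal_span_iff
    by (auto simp: orthogonal_def inner_diff_left inner_axis')
  then show ?thesis by (simp only: eq_on_rtrancl_iff)
qed

lemma equiv_rtrancl_edge_rel: "equiv UNIV ((edge_rel T)\<^sup>*)"
proof -
  have "sym (edge_rel T)"
    unfolding edge_rel_def sym_def by (auto simp: insert_commute)
  then show ?thesis
    unfolding equiv_def by (auto simp: refl_rtrancl sym_rtrancl trans_rtrancl)
qed

lemma dim_edge_space: "dim (edge_space T) + num_components T = CARD('n)"
  for T :: "'n::finite set set"
proof -
  have "dim {y. \<forall>x\<in>edge_space T. orthogonal x y} + dim (edge_space T) = dim (UNIV :: (real^'n) set)"
    using dim_subspace_orthogonal_to_vectors[of "edge_space T" UNIV]
    by (simp add: edge_space_def)
  moreover have "dim {y. \<forall>x\<in>edge_space T. orthogonal x y} = num_components T"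
    unfolding orthogonal_edge_space_iff num_components_def
    by (rule dim_constant_on_classes[OF equiv_rtrancl_edge_rel])
  ultimately show ?thesis by simp
qed

lemma dim_image_vector_matrix_le: "dim ((\<lambda>x. x v* Q) ` W) \<le> min (dim W) CARD('d)"
  for Q :: "(real^'d)^'n"
  using dim_image_le[OF linear_vector_matrix_mult] dim_subset_UNIV_cart[of "(\<lambda>x. x v* Q) ` W"]
  by simp

lemma ideal_dim_le:
  fixes Q :: "(real^'d)^'n"
  shows "ideal_dim Q T \<le> min (int CARD('n) - int (num_components T) - 1) (int CARD('d) - 1)"
  using dim_image_vector_matrix_le[of Q "edge_space T"] dim_edge_space[of T]
  unfolding ideal_dim_eq_dim_image by linarith

definition max_rank_on :: "(real^'d)^'n \<Rightarrow> (real^'n) set \<Rightarrow> bool" where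
  "max_rank_on Q W \<longleftrightarrow> dim ((\<lambda>x. x v* Q) ` W) = min (dim W) CARD('d)"

lemma ideal_dim_eq_iff_max_rank_on:
  fixes Q :: "(real^'d)^'n"
  shows "ideal_dim Q T = min (int CARD('n) - int (num_components T) - 1) (int CARD('d) - 1)
    \<longleftrightarrow> max_rank_on Q (edge_space T)"
  using dim_edge_space[of T]
  unfolding ideal_dim_eq_dim_image max_rank_on_def by linarith

lemma linear_inj_on_subspace_same_image:
  fixes f :: "'a::euclidean_space \<Rightarrow> 'b::real_vector"
  assumes f: "linear f" and W: "subspace W"
  obtains U where "subspace U" "U \<subseteq> W" "f ` U = f ` W" "inj_on f U"
proof
  define K where "K = {x\<in>W. f x = 0}"
  define U where "U = {x\<in>W. \<forall>y\<in>K. orthogonal y x}"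
  have K: "subspace K"
    unfolding K_def using W by (auto simp: subspace_def linear_add[OF f] linear_scale[OF f] linear_0[OF f])
  show "subspace U"
    unfolding U_def using W by (auto simp: subspace_def orthogonal_clauses)
  show "U \<subseteq> W" unfolding U_def by blast
  show "inj_on f U"
  proof (subst linear_inj_on_iff_eq_0[OF f \<open>subspace U\<close>], intro ballI impI)
    fix x assume "x \<in> U" "f x = 0"
    then have "orthogonal x x" unfolding U_def K_def by blast
    then show "x = 0" by (simp add: orthogonal_def)
  qed
  show "f ` U = f ` W"
  proof
    show "f ` W \<subseteq> f ` U"
    proof clarify
      fix x assume x: "x \<in> W"
      obtain y z where y: "y \<in> span K" and z: "\<And>w. w \<in> span K \<Longrightarrow> orthogonal z w"
        and xyz: "x = y + z"
        using orthogonal_subspace_decomp_exists[of K x] by blast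
      have "y \<in> K" using y by (simp add: span_eq_iff[THEN iffD2, OF K])
      then have "z \<in> W" "f y = 0"
        using x W xyz unfolding K_def by (auto dest: subspace_diff[of W x y])
      moreover have "\<forall>w\<in>K. orthogonal w z"
        using z span_base orthogonal_commute by blast
      ultimately have "z \<in> U" unfolding U_def by blast
      moreover have "f x = f z"
        using xyz \<open>f y = 0\<close> by (simp add: linear_add[OF f])
      ultimately show "f x \<in> f ` U" by blast
    qed
  qed (use \<open>U \<subseteq> W\<close> in blast)
qed

lemma eventually_inj_on_vector_matrix:
  fixes Q :: "(real^'d)^'n"
  assumes U: "subspace U" and inj: "inj_on (\<lambda>x. x v* Q) U"
  shows "eventually (\<lambda>Q'. inj_on (\<lambda>x. x v* Q') U) (nhds Q)"
proof -
  have "bounded_linear (\<lambda>x. x v* Q)"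
    using linear_vector_matrix_mult linear_conv_bounded_linear by blast
  then obtain e where e: "e > 0" and bounded_below: "\<forall>x\<in>U. e * norm x \<le> norm (x v* Q)"
    using injective_imp_isometric[OF closed_subspace[OF U] U] inj
      linear_inj_on_iff_eq_0[OF linear_vector_matrix_mult U] by blast
  have "inj_on (\<lambda>x. x v* Q') U" if "dist Q' Q < e / CARD('n)" for Q'
  proof (subst linear_inj_on_iff_eq_0[OF linear_vector_matrix_mult U], intro ballI impI)
    fix x assume x: "x \<in> U" "x v* Q' = 0"
    have "e * norm x \<le> norm (x v* (Q - Q'))"
      using bounded_below x by (simp add: vector_matrix_mult_diff_rdistrib)
    also have "\<dots> \<le> CARD('n) * norm x * dist Q' Q"
      using norm_vector_matrix_mult_le[of x "Q - Q'"] by (simp add: dist_norm norm_minus_commute)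
    finally have "e * norm x \<le> CARD('n) * dist Q' Q * norm x" by (simp add: ac_simps)
    moreover have "CARD('n) * dist Q' Q < e"
      using that by (simp add: field_simps)
    ultimately show "x = 0"
      by (metis linorder_not_le mult_strict_right_mono zero_less_norm_iff)
  qed
  then show ?thesis
    unfolding eventually_nhds_metric using e by (intro exI[of _ "e / CARD('n)"]) simp
qed

lemma eventually_dim_image_vector_matrix_ge:
  fixes Q :: "(real^'d)^'n"
  assumes W: "subspace W"
  shows "eventually (\<lambda>Q'. dim ((\<lambda>x. x v* Q) ` W) \<le> dim ((\<lambda>x. x v* Q') ` W)) (nhds Q)"
proof -
  obtain U where U: "subspace U" "U \<subseteq> W" and image: "(\<lambda>x. x v* Q) ` U = (\<lambda>x. x v* Q) ` W"
    and inj: "inj_on (\<lambda>x. x v* Q) U"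
    using linear_inj_on_subspace_same_image[OF linear_vector_matrix_mult W] by blast
  show ?thesis
    using eventually_inj_on_vector_matrix[OF U(1) inj]
  proof eventually_elim
    case (elim Q')
    have "dim ((\<lambda>x. x v* Q) ` W) \<le> dim U"
      unfolding image[symmetric] by (rule dim_image_le[OF linear_vector_matrix_mult])
    also have "\<dots> = dim ((\<lambda>x. x v* Q') ` U)"
      using elim U(1) by (simp add: dim_image_eq[OF linear_vector_matrix_mult] span_eq_iff[THEN iffD2])
    also have "\<dots> \<le> dim ((\<lambda>x. x v* Q') ` W)"
      using U(2) by (intro dim_subset image_mono)
    finally show ?case .
  qed
qed

lemma open_max_rank_on:
  fixes W :: "(real^'n) set"
  assumes W: "subspace W"
  shows "open {Q::(real^'d)^'n. max_rank_on Q W}"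
  unfolding open_dist
proof
  fix Q :: "(real^'d)^'n" assume "Q \<in> {Q. max_rank_on Q W}"
  then have Q: "max_rank_on Q W" by simp
  have "eventually (\<lambda>Q'. max_rank_on Q' W) (nhds Q)"
    using eventually_dim_image_vector_matrix_ge[OF W, of Q]
  proof eventually_elim
    case (elim Q')
    then show ?case
      using Q dim_image_vector_matrix_le[of Q' W] unfolding max_rank_on_def by linarith
  qed
  then show "\<exists>e>0. \<forall>Q'. dist Q' Q < e \<longrightarrow> Q' \<in> {Q. max_rank_on Q W}"
    unfolding eventually_nhds_metric by simp
qed

lemma vector_matrix_mult_rank_one: "x v* (\<chi> i. w $ i *\<^sub>R v) = (x \<bullet> w) *\<^sub>R v"
  for v :: "real^'m" and w x :: "real^'n"
  by (simp add: vec_eq_iff vector_matrix_mult_def inner_vec_def sum_distrib_right mult.assoc)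

lemma image_rank_one_perturbation:
  fixes Q :: "(real^'d)^'n"
  assumes W: "subspace W" and w: "w \<in> W" "w \<noteq> 0" "w v* Q = 0" and t: "t \<noteq> 0"
  shows "(\<lambda>x. x v* (Q + t *\<^sub>R (\<chi> i. w $ i *\<^sub>R v))) ` W = span (insert v ((\<lambda>x. x v* Q) ` W))"
    (is "?S' = span (insert v ?S)")
proof
  have perturbed: "x v* (Q + t *\<^sub>R (\<chi> i. w $ i *\<^sub>R v)) = x v* Q + (t * (x \<bullet> w)) *\<^sub>R v" for x
    by (simp add: vector_matrix_mult_add_rdistrib vector_scaleR_matrix_ac vector_matrix_mult_rank_one)
  show "?S' \<subseteq> span (insert v ?S)"
  proof clarify
    fix x assume "x \<in> W"
    then have "x v* Q \<in> span (insert v ?S)" "v \<in> span (insert v ?S)"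
      by (auto intro: span_base)
    then show "x v* (Q + t *\<^sub>R (\<chi> i. w $ i *\<^sub>R v)) \<in> span (insert v ?S)"
      unfolding perturbed by (intro span_add span_scale)
  qed
  have S': "subspace ?S'"
    by (rule linear_subspace_image[OF linear_vector_matrix_mult W])
  have "(1 / (t * (w \<bullet> w))) *\<^sub>R w \<in> W"
    using W w(1) by (rule subspace_scale)
  moreover have "((1 / (t * (w \<bullet> w))) *\<^sub>R w) v* (Q + t *\<^sub>R (\<chi> i. w $ i *\<^sub>R v)) = v"
    using t w(2,3) by (simp add: perturbed scaleR_vector_matrix_assoc)
  ultimately have v: "v \<in> ?S'" by (metis image_eqI)
  have "y v* Q \<in> ?S'" if "y \<in> W" for y
  proof -
    have "y v* Q = y v* (Q + t *\<^sub>R (\<chi> i. w $ i *\<^sub>R v)) - (t * (y \<bullet> w)) *\<^sub>R v"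
      by (simp add: perturbed)
    then show ?thesis
      using that v S' by (simp add: subspace_diff subspace_scale)
  qed
  then show "span (insert v ?S) \<subseteq> ?S'"
    using v S' by (intro span_minimal) auto
qed

lemma rank_one_perturbation_increases_dim:
  fixes Q :: "(real^'d)^'n"
  assumes W: "subspace W"
    and lt_dim: "dim ((\<lambda>x. x v* Q) ` W) < dim W" and lt_card: "dim ((\<lambda>x. x v* Q) ` W) < CARD('d)"
  obtains R where "\<And>t. t \<noteq> 0 \<Longrightarrow> dim ((\<lambda>x. x v* (Q + t *\<^sub>R R)) ` W) = Suc (dim ((\<lambda>x. x v* Q) ` W))"
proof -
  let ?S = "(\<lambda>x. x v* Q) ` W"
  have "\<not> inj_on (\<lambda>x. x v* Q) W"
    using dim_image_eq[OF linear_vector_matrix_mult, of Q W] lt_dim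
    by (auto simp: span_eq_iff[THEN iffD2, OF W])
  then obtain w where w: "w \<in> W" "w \<noteq> 0" "w v* Q = 0"
    using linear_inj_on_iff_eq_0[OF linear_vector_matrix_mult W] by blast
  have "?S \<noteq> UNIV"
    using lt_card by auto
  then obtain v where "v \<notin> ?S" by blast
  moreover have "subspace ?S"
    by (rule linear_subspace_image[OF linear_vector_matrix_mult W])
  ultimately have "v \<notin> span ?S"
    by (simp add: span_eq_iff[THEN iffD2])
  with image_rank_one_perturbation[OF W w] show ?thesis
    by (intro that[of "\<chi> i. w $ i *\<^sub>R v"]) (simp add: dim_insert)
qed

lemma dense_max_rank_on:
  fixes W :: "(real^'n) set"
  assumes W: "subspace W"
  shows "closure {Q::(real^'d)^'n. max_rank_on Q W} = UNIV"
proof -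
  have "\<exists>Q'. max_rank_on Q' W \<and> dist Q' Q < e"
    if "min (dim W) CARD('d) - dim ((\<lambda>x. x v* Q) ` W) = n" and "e > 0" for n and Q :: "(real^'d)^'n" and e
    using that
  proof (induction n arbitrary: Q e)
    case 0
    then have "max_rank_on Q W"
      using dim_image_vector_matrix_le[of Q W] unfolding max_rank_on_def by linarith
    then show ?case using \<open>e > 0\<close> by force
  next
    case (Suc n)
    then obtain R where R: "\<And>t. t \<noteq> 0 \<Longrightarrow>
        dim ((\<lambda>x. x v* (Q + t *\<^sub>R R)) ` W) = Suc (dim ((\<lambda>x. x v* Q) ` W))"
      using rank_one_perturbation_increases_dim[OF W] by (metis min_less_iff_conj zero_less_Suc zero_less_diff)
    have norm_pos: "norm R + 1 > 0"
      using norm_ge_zero[of R] by linarith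
    define t where "t = e / (2 * (norm R + 1))"
    have t: "t > 0" unfolding t_def using Suc.prems(2) norm_pos by simp
    have "dist (Q + t *\<^sub>R R) Q = t * norm R"
      using t by (simp add: dist_norm)
    also have "\<dots> < t * (norm R + 1)"
      using t by simp
    also have "\<dots> = e / 2"
      unfolding t_def using norm_pos by (simp add: field_simps)
    finally have close: "dist (Q + t *\<^sub>R R) Q < e / 2" .
    have "min (dim W) CARD('d) - dim ((\<lambda>x. x v* (Q + t *\<^sub>R R)) ` W) = n"
      using R[of t] t Suc.prems(1) by simp
    then obtain Q' where "max_rank_on Q' W" "dist Q' (Q + t *\<^sub>R R) < e / 2"
      using Suc.IH[of "Q + t *\<^sub>R R" "e / 2"] Suc.prems(2) by auto
    then show ?case
      using close dist_triangle_half_l[of Q' "Q + t *\<^sub>R R" e Q] by (metis dist_commute)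
  qed
  then have "Q \<in> closure {Q. max_rank_on Q W}" for Q :: "(real^'d)^'n"
    unfolding closure_approachable by blast
  then show ?thesis by blast
qed

lemma dense_Inter_max_rank_on:
  fixes \<W> :: "(real^'n) set set"
  assumes "finite \<W>" and "\<And>W. W \<in> \<W> \<Longrightarrow> subspace W"
  shows "closure {Q::(real^'d)^'n. \<forall>W\<in>\<W>. max_rank_on Q W} = UNIV"
proof -
  have "UNIV \<subseteq> closure (\<Inter>W\<in>\<W>. {Q::(real^'d)^'n. max_rank_on Q W})"
    using assms by (intro Baire) (auto simp: open_max_rank_on dense_max_rank_on intro: countable_finite)
  moreover have "(\<Inter>W\<in>\<W>. {Q::(real^'d)^'n. max_rank_on Q W}) = {Q. \<forall>W\<in>\<W>. max_rank_on Q W}"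
    by blast
  ultimately show ?thesis by auto
qed

lemma open_Inter_max_rank_on:
  fixes \<W> :: "(real^'n) set set"
  assumes "finite \<W>" and "\<And>W. W \<in> \<W> \<Longrightarrow> subspace W"
  shows "open {Q::(real^'d)^'n. \<forall>W\<in>\<W>. max_rank_on Q W}"
proof -
  have "open (\<Inter>W\<in>\<W>. {Q::(real^'d)^'n. max_rank_on Q W})"
    using assms by (intro open_INT) (auto simp: open_max_rank_on)
  moreover have "(\<Inter>W\<in>\<W>. {Q::(real^'d)^'n. max_rank_on Q W}) = {Q. \<forall>W\<in>\<W>. max_rank_on Q W}"
    by blast
  ultimately show ?thesis by simp
qed

lemma is_pair_set_star:
  assumes "a \<notin> J"
  shows "is_pair_set {{a, j} | j. j \<in> J}"
  unfolding is_pair_set_def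
proof clarify
  fix j assume "j \<in> J"
  then have "a \<noteq> j" using assms by blast
  then show "\<exists>i j'. i \<noteq> j' \<and> {a, j} = {i, j'}" by blast
qed

lemma edge_space_star:
  assumes a: "a \<notin> J"
  shows "edge_space {{a, j} | j. j \<in> J} = span ((\<lambda>j. axis j 1 - axis a 1 :: real^'n) ` J)"
proof -
  let ?T = "{{a, j} | j. j \<in> J}"
  let ?E = "(\<lambda>j. axis j 1 - axis a 1 :: real^'n) ` J"
  have "axis v 1 - axis u 1 \<in> span ?E" if uv: "(u, v) \<in> edge_rel ?T" for u v
  proof -
    obtain j where j: "j \<in> J" "{u, v} = {a, j}"
      using uv unfolding edge_rel_def by blast
    then have "axis j 1 - axis a 1 \<in> span ?E" by (intro span_base) blast
    then show ?thesis
      using j(2) span_neg[of "axis j 1 - axis a 1" ?E] by (auto simp: doubleton_eq_iff)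
  qed
  moreover have "(a, j) \<in> edge_rel ?T" if "j \<in> J" for j
    using that a unfolding edge_rel_def by blast
  ultimately show ?thesis
    unfolding edge_space_def span_eq by (force intro: span_base)
qed

lemma independent_axis_diffs:
  fixes a :: "'n::finite"
  assumes a: "a \<notin> J"
  shows "independent ((\<lambda>j. axis j 1 - axis a 1 :: real^'n) ` J)"
    and "inj_on (\<lambda>j. axis j 1 - axis a 1 :: real^'n) J"
proof -
  define g :: "'n \<Rightarrow> real^'n" where "g j = axis j 1 - axis a 1" for j
  have g_nth: "g j $ k = (if k = j then 1 else 0)" if "k \<in> J" for j k
    using a that by (auto simp: g_def axis_def)
  show inj: "inj_on g J"
    by (rule inj_onI) (metis g_nth one_neq_zero)
  show "independent (g ` J)"
  proof (rule independent_if_scalars_zero)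
    fix c x assume sum: "(\<Sum>x\<in>g ` J. c x *\<^sub>R x) = 0" and "x \<in> g ` J"
    then obtain k where k: "k \<in> J" "x = g k" by blast
    have "0 = (\<Sum>j\<in>J. c (g j) *\<^sub>R g j) $ k"
      using sum by (simp add: sum.reindex[OF inj])
    also have "\<dots> = (\<Sum>j\<in>J. if j = k then c (g j) else 0)"
      unfolding sum_component by (intro sum.cong) (auto simp: g_nth k(1))
    also have "\<dots> = c x"
      using k by simp
    finally show "c x = 0" ..
  qed simp
qed

lemma independent_directions_if_max_rank_on:
  fixes Q :: "(real^'d)^'n"
  assumes a: "a \<notin> J" and J: "card J \<le> CARD('d)"
    and max_rank: "max_rank_on Q (edge_space {{a, j} | j. j \<in> J})"
  shows "independent ((\<lambda>j. Q $ j - Q $ a) ` J)"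
proof -
  let ?E = "(\<lambda>j. axis j 1 - axis a 1 :: real^'n) ` J"
  let ?D = "(\<lambda>j. Q $ j - Q $ a) ` J"
  have "(\<lambda>x. x v* Q) ` edge_space {{a, j} | j. j \<in> J} = span ?D"
    unfolding edge_space_star[OF a] linear_span_image[OF linear_vector_matrix_mult, symmetric]
    by (simp add: image_image axis_diff_vector_matrix_mult)
  moreover have "dim (edge_space {{a, j} | j. j \<in> J}) = card J"
    unfolding edge_space_star[OF a] dim_span
    using dim_eq_card_independent[OF independent_axis_diffs(1)[OF a]]
      card_image[OF independent_axis_diffs(2)[OF a]] by simp
  ultimately have dim_D: "dim ?D = card J"
    using max_rank J unfolding max_rank_on_def by simp
  have "dim ?D \<le> card ?D"
    by (rule dim_le_card') simp
  moreover have "card ?D \<le> card J"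
    by (rule card_image_le) simp
  ultimately have "card ?D = dim ?D"
    using dim_D by linarith
  then show ?thesis
    using card_eq_dim[of ?D ?D] span_superset by simp
qed

lemma inj_if_max_rank_on:
  fixes Q :: "(real^'d)^'n"
  assumes "\<And>T. is_pair_set T \<Longrightarrow> max_rank_on Q (edge_space T)"
  shows "inj (\<lambda>i. Q $ i)"
proof (rule injI, rule ccontr)
  fix i j assume eq: "Q $ i = Q $ j" and "i \<noteq> j"
  then have i: "i \<notin> {j}" by simp
  have "independent ((\<lambda>k. Q $ k - Q $ i) ` {j})"
    using independent_directions_if_max_rank_on[OF i _ assms[OF is_pair_set_star[OF i]]] by simp
  then show False
    using eq by (simp add: dependent_zero)
qed

lemma simple_position_if_max_rank_on:
  fixes Q :: "(real^'d)^'n"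
  assumes max_rank: "\<And>T. is_pair_set T \<Longrightarrow> max_rank_on Q (edge_space T)"
  shows "simple_position Q"
  unfolding simple_position_def
proof (intro allI impI)
  fix I :: "'n set" assume card_I: "card I \<le> CARD('d) + 1"
  show "\<not> affine_dependent ((\<lambda>i. Q $ i) ` I)"
  proof (cases "I = {}")
    case False
    then obtain a where a: "a \<in> I" by blast
    let ?J = "I - {a}"
    have a_J: "a \<notin> ?J" by simp
    have "card ?J \<le> CARD('d)"
      using card_I a by (simp add: card_Diff_singleton)
    then have "independent ((\<lambda>j. Q $ j - Q $ a) ` ?J)"
      by (rule independent_directions_if_max_rank_on[OF a_J _ max_rank[OF is_pair_set_star[OF a_J]]])
    moreover have "Q $ a \<notin> (\<lambda>i. Q $ i) ` ?J"
      using inj_if_max_rank_on[OF max_rank] by (auto dest: injD)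
    moreover have "(\<lambda>i. Q $ i) ` I = insert (Q $ a) ((\<lambda>i. Q $ i) ` ?J)"
      using a by blast
    ultimately show ?thesis
      by (simp add: affine_dependent_iff_dependent image_image)
  qed simp
qed

theorem lemma5p5:
  shows "(\<forall>(Q::(real^'d)^'n) T. inj (\<lambda>i. Q $ i) \<and> is_pair_set T \<longrightarrow>
            ideal_dim Q T \<le> min (int CARD('n) - int (num_components T) - 1) (int CARD('d) - 1))
       \<and> (let G = {Q::(real^'d)^'n. inj (\<lambda>i. Q $ i) \<and>
                    (\<forall>T. is_pair_set T \<longrightarrow>
                       ideal_dim Q T = min (int CARD('n) - int (num_components T) - 1) (int CARD('d) - 1))}
          in open G \<and> closure G = UNIV \<and> (\<forall>Q\<in>G. simple_position Q))"
proof -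
  define \<W> where "\<W> = edge_space ` {T :: 'n set set. is_pair_set T}"
  have "finite \<W>" and subspaces: "\<And>W. W \<in> \<W> \<Longrightarrow> subspace W"
    by (auto simp: \<W>_def edge_space_def)
  have good_set: "{Q::(real^'d)^'n. inj (\<lambda>i. Q $ i) \<and>
          (\<forall>T. is_pair_set T \<longrightarrow>
             ideal_dim Q T = min (int CARD('n) - int (num_components T) - 1) (int CARD('d) - 1))}
      = {Q. \<forall>W\<in>\<W>. max_rank_on Q W}"
    using inj_if_max_rank_on by (auto simp: \<W>_def ideal_dim_eq_iff_max_rank_on)
  have "simple_position Q" if "\<forall>W\<in>\<W>. max_rank_on Q W" for Q :: "(real^'d)^'n"
    using that simple_position_if_max_rank_on by (auto simp: \<W>_def)
  then show ?thesis
    unfolding Let_def good_set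
    using ideal_dim_le open_Inter_max_rank_on[OF \<open>finite \<W>\<close> subspaces]
      dense_Inter_max_rank_on[OF \<open>finite \<W>\<close> subspaces]
    by blast
qed

end
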